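(* Let $D,\chi,\varepsilon>0$, $a\ge 0$, $\beta>0$, $b=D\beta^2$. Then there is no $r_0>0$ and no pair of functions $\rho\in C^0[0,\infty)$, $\phi\in C^2[0,\infty)$ with $\rho\ge 0$, $\phi(0)\ge 0$, such that $\rho(0)=0$, $\rho>0$ on $(0,r_0)$, $\rho\equiv0$ on $[r_0,\infty)$, $\rho$ is differentiable on $(0,r_0)$ with $\varepsilon\rho\rho_r=\chi\rho\phi_r$ there, and $D\phi_{rr}+D\frac{\phi_r}{r}+a\rho-b\phi=0$ on $(0,\infty)$. (That is, there is no single whole bump solution touching $r=0$.)
   Context: The system $\partial_r(\frac{\varepsilon}{2}\rho^2)=\chi\rho\phi_r$, $D\phi_{rr}+D\phi_r/r+a\rho-b\phi=0$ is the radially symmetric stationary form of a hyperbolic-parabolic chemotaxis model on $\mathbb{R}^2$ with pressure $p(\rho)=\frac{\varepsilon}{2}\rho^2$; $r=|x|$. *)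

theory Defs
  imports "HOL-Analysis.Analysis"
begin

definition C2_halfline :: "(real \<Rightarrow> real) \<Rightarrow> (real \<Rightarrow> real) \<Rightarrow> (real \<Rightarrow> real) \<Rightarrow> bool" where
  "C2_halfline phi phi1 phi2 \<longleftrightarrow>
     (\<forall>r\<ge>0. (phi has_real_derivative phi1 r) (at r within {0..})) \<and>
     (\<forall>r\<ge>0. (phi1 has_real_derivative phi2 r) (at r within {0..})) \<and>
     continuous_on {0..} phi2"

end

theory Submission
  imports Defs
begin

text \<open>Where \<open>rho > 0\<close> the balance law \<open>eps rho rho' = chi rho phi'\<close> integrates to
  \<open>eps rho - chi phi = const\<close>, so on the support \<open>[0, r0]\<close> the density is
  \<open>chi / eps (phi - phi 0)\<close>; in particular \<open>phi r0 = phi 0\<close>.  Multiplying the equation for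
  \<open>phi\<close> by \<open>r\<close> and letting \<open>r \<rightarrow> 0\<close> gives \<open>phi' 0 = 0\<close>.  On \<open>(0, r0)\<close> the function
  \<open>phi\<close> then solves \<open>D (phi'' + phi' / r) + g phi = 0\<close> with \<open>g\<close> affine, and the energy
  \<open>D phi'\<^sup>2 / 2 + G phi\<close> with \<open>G' = g\<close> has derivative \<open>- D phi'\<^sup>2 / r \<le> 0\<close>.  Its values at
  \<open>0\<close> and \<open>r0\<close> differ only by \<open>D phi' r0\<^sup>2 / 2 \<ge> 0\<close>, so it is constant; hence \<open>phi' = 0\<close>,
  \<open>phi\<close> is constant on \<open>[0, r0]\<close> and \<open>rho\<close> vanishes there.  No sign conditions on \<open>a\<close>,
  \<open>b\<close> or \<open>phi 0\<close> are needed.\<close>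

lemma C2_halfline_DERIV:
  assumes "C2_halfline phi phi1 phi2" "r > 0"
  shows "(phi has_real_derivative phi1 r) (at r)" "(phi1 has_real_derivative phi2 r) (at r)"
proof -
  have "(phi has_real_derivative phi1 r) (at r within {0..})"
    "(phi1 has_real_derivative phi2 r) (at r within {0..})"
    using assms unfolding C2_halfline_def by auto
  moreover have "at r within {0..} = at r"
    using \<open>r > 0\<close> by (intro at_within_interior) simp
  ultimately show "(phi has_real_derivative phi1 r) (at r)" "(phi1 has_real_derivative phi2 r) (at r)"
    by simp_all
qed

lemma C2_halfline_continuous_on:
  assumes "C2_halfline phi phi1 phi2"
  shows "continuous_on {0..} phi" "continuous_on {0..} phi1" "continuous_on {0..} phi2"
  using assms unfolding C2_halfline_def by (auto intro: DERIV_continuous_on)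

lemma first_integral_of_flux_balance:
  fixes rho phi phi1 :: "real \<Rightarrow> real" and eps chi R r :: real
  assumes cont_rho: "continuous_on {0..R} rho" and cont_phi: "continuous_on {0..R} phi"
    and nonzero: "\<And>s. 0 < s \<Longrightarrow> s < R \<Longrightarrow> rho s \<noteq> 0"
    and phi': "\<And>s. 0 < s \<Longrightarrow> s < R \<Longrightarrow> (phi has_real_derivative phi1 s) (at s)"
    and balance: "\<And>s. 0 < s \<Longrightarrow> s < R \<Longrightarrow>
      \<exists>rho'. (rho has_real_derivative rho') (at s) \<and> eps * rho s * rho' = chi * rho s * phi1 s"
    and "0 \<le> r" "r \<le> R"
  shows "eps * rho r - chi * phi r = eps * rho 0 - chi * phi 0"
proof (cases "R = 0")
  case True
  then show ?thesis using \<open>0 \<le> r\<close> \<open>r \<le> R\<close> by simp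
next
  case False
  then have "R > 0" using assms by simp
  have "((\<lambda>s. eps * rho s - chi * phi s) has_real_derivative 0) (at s)" if s: "0 < s" "s < R" for s
  proof -
    obtain rho' where rho': "(rho has_real_derivative rho') (at s)"
      and "eps * rho s * rho' = chi * rho s * phi1 s"
      using balance[OF s] by blast
    then have "eps * rho' = chi * phi1 s" using nonzero[OF s] by simp
    then show ?thesis
      using DERIV_diff[OF DERIV_cmult[OF rho', of eps] DERIV_cmult[OF phi'[OF s], of chi]] by simp
  qed
  moreover have "continuous_on {0..R} (\<lambda>s. eps * rho s - chi * phi s)"
    by (intro continuous_intros cont_rho cont_phi)
  ultimately show ?thesis
    using DERIV_isconst2[OF \<open>R > 0\<close> _ _ \<open>0 \<le> r\<close> \<open>r \<le> R\<close>] by blast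
qed

lemma zero_at_0_if_quotient_by_radius_continuous:
  fixes F G :: "real \<Rightarrow> real"
  assumes "continuous_on {0..} F" "continuous_on {0..} G"
    and "\<And>r. r > 0 \<Longrightarrow> F r + G r / r = 0"
  shows "G 0 = 0"
proof -
  have "continuous_on (closure {0<..}) (\<lambda>r. r * F r + G r)"
    using assms(1,2) by (simp, intro continuous_intros)
  moreover have "r * F r + G r = 0" if "r \<in> {0<..}" for r
    using assms(3)[of r] that by (simp add: field_simps)
  ultimately have "0 * F 0 + G 0 = 0"
    by (rule continuous_constant_on_closure) auto
  then show ?thesis by simp
qed

lemma radial_energy_rigidity:
  fixes f f' f'' g G :: "real \<Rightarrow> real" and D R r :: real
  assumes "D > 0" "R > 0"
    and G': "\<And>x. (G has_real_derivative g x) (at x)"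
    and cont_f: "continuous_on {0..R} f" and cont_f': "continuous_on {0..R} f'"
    and DERIV_f: "\<And>r. 0 < r \<Longrightarrow> r < R \<Longrightarrow> (f has_real_derivative f' r) (at r)"
    and DERIV_f': "\<And>r. 0 < r \<Longrightarrow> r < R \<Longrightarrow> (f' has_real_derivative f'' r) (at r)"
    and ode: "\<And>r. 0 < r \<Longrightarrow> r < R \<Longrightarrow> D * f'' r + D * f' r / r + g (f r) = 0"
    and "f' 0 = 0" "f R = f 0"
    and "0 \<le> r" "r \<le> R"
  shows "f r = f 0"
proof -
  define E where "E s = D * (f' s)\<^sup>2 / 2 + G (f s)" for s
  have E': "(E has_real_derivative - D * (f' s)\<^sup>2 / s) (at s)" if "0 < s" "s < R" for s
  proof -
    have "(E has_real_derivative f' s * (D * f'' s + g (f s))) (at s)"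
      unfolding E_def
      by (rule derivative_eq_intros DERIV_chain2[OF G'] DERIV_f'[OF that] DERIV_f[OF that] refl | simp)+
        (simp add: algebra_simps)
    also have "f' s * (D * f'' s + g (f s)) = - D * (f' s)\<^sup>2 / s"
    proof -
      have g_eq: "g (f s) = - D * f'' s - D * f' s / s" using ode[OF that] by simp
      show ?thesis by (subst g_eq) (simp add: power2_eq_square)
    qed
    finally show ?thesis .
  qed
  have "continuous_on {0..R} (G \<circ> f)"
    using cont_f continuous_on_subset[OF DERIV_continuous_on[OF G']] by (intro continuous_on_compose) auto
  then have cont_E: "continuous_on {0..R} E"
    unfolding E_def o_def by (intro continuous_intros cont_f') auto
  have E_antimono: "E t \<le> E s" if "0 \<le> s" "s \<le> t" "t \<le> R" for s t
  proof (rule DERIV_nonpos_imp_decreasing_open[OF \<open>s \<le> t\<close>])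
    show "continuous_on {s..t} E" using cont_E that by (auto intro: continuous_on_subset)
    fix x assume "s < x" "x < t"
    then show "\<exists>y. (E has_real_derivative y) (at x) \<and> y \<le> 0"
      using E'[of x] that \<open>D > 0\<close> by (intro exI[of _ "- D * (f' x)\<^sup>2 / x"]) auto
  qed
  have "E 0 \<le> E R"
    unfolding E_def using \<open>f' 0 = 0\<close> \<open>f R = f 0\<close> \<open>D > 0\<close> by simp
  then have E_const: "E s = E 0" if "0 \<le> s" "s \<le> R" for s
    using E_antimono[of 0 s] E_antimono[of s R] that by linarith
  have f'_zero: "f' s = 0" if "0 < s" "s < R" for s
  proof -
    have "- D * (f' s)\<^sup>2 / s = 0"
    proof (rule DERIV_local_const[OF E'[OF that]])
      show "0 < min s (R - s)" using that by simp
      show "\<forall>y. \<bar>s - y\<bar> < min s (R - s) \<longrightarrow> E s = E y"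
      proof (intro allI impI)
        fix y assume "\<bar>s - y\<bar> < min s (R - s)"
        then have "0 \<le> y" "y \<le> R" by (auto simp: abs_less_iff)
        then show "E s = E y" using E_const[of s] E_const[of y] that by simp
      qed
    qed
    then show ?thesis using that \<open>D > 0\<close> by simp
  qed
  show ?thesis
    using DERIV_isconst2[OF \<open>R > 0\<close> cont_f _ \<open>0 \<le> r\<close> \<open>r \<le> R\<close>] DERIV_f f'_zero by simp
qed

lemma no_bump_solution_touching_origin:
  fixes D chi eps a b r0 :: real and rho phi phi1 phi2 :: "real \<Rightarrow> real"
  assumes "D > 0" "chi \<noteq> 0" "eps \<noteq> 0" "r0 > 0"
    and cont_rho: "continuous_on {0..} rho" and C2: "C2_halfline phi phi1 phi2"
    and "rho 0 = 0" "rho r0 = 0"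
    and rho_pos: "\<And>r. 0 < r \<Longrightarrow> r < r0 \<Longrightarrow> rho r > 0"
    and balance: "\<And>r. 0 < r \<Longrightarrow> r < r0 \<Longrightarrow>
      \<exists>rho'. (rho has_real_derivative rho') (at r) \<and> eps * rho r * rho' = chi * rho r * phi1 r"
    and ode: "\<And>r. r > 0 \<Longrightarrow> D * phi2 r + D * phi1 r / r + a * rho r - b * phi r = 0"
  shows False
proof -
  note phi' = C2_halfline_DERIV(1)[OF C2] and phi1' = C2_halfline_DERIV(2)[OF C2]
  note cont_phi = C2_halfline_continuous_on(1)[OF C2]
    and cont_phi1 = C2_halfline_continuous_on(2)[OF C2]
    and cont_phi2 = C2_halfline_continuous_on(3)[OF C2]
  define k where "k = chi / eps"
  have "k \<noteq> 0" using assms(2,3) by (simp add: k_def)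
  have rho_eq: "rho r = k * (phi r - phi 0)" if "0 \<le> r" "r \<le> r0" for r
  proof -
    have "eps * rho r - chi * phi r = eps * rho 0 - chi * phi 0"
    proof (rule first_integral_of_flux_balance[OF _ _ _ phi' balance that])
      show "continuous_on {0..r0} rho" "continuous_on {0..r0} phi"
        by (auto intro: continuous_on_subset[OF cont_rho] continuous_on_subset[OF cont_phi])
    qed (use rho_pos in force)
    then show ?thesis using \<open>rho 0 = 0\<close> \<open>eps \<noteq> 0\<close> by (simp add: k_def field_simps)
  qed
  have "phi r0 = phi 0" using rho_eq[of r0] \<open>rho r0 = 0\<close> \<open>k \<noteq> 0\<close> \<open>r0 > 0\<close> by simp
  have "D * phi1 0 = 0"
  proof (rule zero_at_0_if_quotient_by_radius_continuous[where G = "\<lambda>r. D * phi1 r"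
        and F = "\<lambda>r. D * phi2 r + a * rho r - b * phi r"])
    show "continuous_on {0..} (\<lambda>r. D * phi2 r + a * rho r - b * phi r)"
      by (intro continuous_intros cont_phi2 cont_rho cont_phi)
    show "continuous_on {0..} (\<lambda>r. D * phi1 r)"
      by (intro continuous_intros cont_phi1)
    show "D * phi2 r + a * rho r - b * phi r + D * phi1 r / r = 0" if "r > 0" for r
      using ode[OF that] by simp
  qed
  then have "phi1 0 = 0" using \<open>D > 0\<close> by simp
  have "phi (r0 / 2) = phi 0"
  proof (rule radial_energy_rigidity[where f = phi and f' = phi1 and f'' = phi2 and R = r0
        and g = "\<lambda>x. a * k * (x - phi 0) - b * x"
        and G = "\<lambda>x. a * k * (x - phi 0)\<^sup>2 / 2 - b * x\<^sup>2 / 2"])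
    show "((\<lambda>x. a * k * (x - phi 0)\<^sup>2 / 2 - b * x\<^sup>2 / 2) has_real_derivative
        a * k * (x - phi 0) - b * x) (at x)" for x
      by (auto intro!: derivative_eq_intros)
    show "D * phi2 r + D * phi1 r / r + (a * k * (phi r - phi 0) - b * phi r) = 0"
      if "0 < r" "r < r0" for r
      using ode[of r] rho_eq[of r] that by (simp add: algebra_simps)
    show "continuous_on {0..r0} phi" "continuous_on {0..r0} phi1"
      by (auto intro: continuous_on_subset[OF cont_phi] continuous_on_subset[OF cont_phi1])
  qed (use \<open>D > 0\<close> \<open>r0 > 0\<close> \<open>phi1 0 = 0\<close> \<open>phi r0 = phi 0\<close> phi' phi1' in auto)
  then show False using rho_eq[of "r0 / 2"] rho_pos[of "r0 / 2"] \<open>r0 > 0\<close> by simp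
qed

theorem mainTheorem3:
  fixes D chi eps a beta b :: real
  assumes "D > 0" and "chi > 0" and "eps > 0" and "a \<ge> 0" and "beta > 0"
    and "b = D * beta\<^sup>2"
  shows "\<not> (\<exists>r0 > 0. \<exists>rho phi phi1 phi2 :: real \<Rightarrow> real.
            continuous_on {0..} rho \<and> C2_halfline phi phi1 phi2 \<and>
            (\<forall>r\<ge>0. rho r \<ge> 0) \<and> phi 0 \<ge> 0 \<and>
            rho 0 = 0 \<and>
            (\<forall>r. 0 < r \<and> r < r0 \<longrightarrow> rho r > 0) \<and>
            (\<forall>r\<ge>r0. rho r = 0) \<and>
            (\<forall>r. 0 < r \<and> r < r0 \<longrightarrow>
               (\<exists>rho'. (rho has_real_derivative rho') (at r) \<and>
                       eps * rho r * rho' = chi * rho r * phi1 r)) \<and>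
            (\<forall>r>0. D * phi2 r + D * phi1 r / r + a * rho r - b * phi r = 0))"
proof (intro notI, elim exE conjE)
  fix r0 and rho phi phi1 phi2 :: "real \<Rightarrow> real"
  assume "r0 > 0" "continuous_on {0..} rho" "C2_halfline phi phi1 phi2" "rho 0 = 0"
    "\<forall>r. 0 < r \<and> r < r0 \<longrightarrow> rho r > 0" "\<forall>r\<ge>r0. rho r = 0"
    "\<forall>r. 0 < r \<and> r < r0 \<longrightarrow> (\<exists>rho'. (rho has_real_derivative rho') (at r) \<and>
       eps * rho r * rho' = chi * rho r * phi1 r)"
    "\<forall>r>0. D * phi2 r + D * phi1 r / r + a * rho r - b * phi r = 0"
  then show False
    using no_bump_solution_touching_origin[of D chi eps r0 rho phi phi1 phi2 a b] assms by auto
qed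

end
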